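(* Assume $g(k)\sim k^\alpha$ for some $\alpha\in(0,1]$. For $\varphi>0$ let $X$ have distribution $\mathcal P_\varphi$. Then for each $n\in\mathbb N$, $E[X^n]\sim\varphi^{n/\alpha}$ as $\varphi\to\infty$. Consequently $\ln Z(\varphi)\sim\alpha\varphi^{1/\alpha}$ and $\mathrm{Var}[X]=o(\varphi^{2/\alpha})$ as $\varphi\to\infty$.
   Context: $g:\mathbb N_0\to[0,\infty)$ with $g(n)=0$ iff $n=0$ (also Lipschitz and nondecreasing), $\lim_{k\to\infty}g(k)/k^\alpha=1$. $g(0)!=1$, $g(n)!=\prod_{i=1}^ng(i)$, $Z(\phi)=\sum_{n\ge0}\phi^n/g(n)!$, $\mathcal P_\phi(n)=\phi^n/(g(n)!Z(\phi))$. $a(\varphi)\sim b(\varphi)$ means $a/b\to1$. *)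

theory Defs
  imports "HOL-Analysis.Analysis" "HOL-Library.Landau_Symbols"
begin

definition admissible_g :: "(nat \<Rightarrow> real) \<Rightarrow> bool" where
  "admissible_g g \<longleftrightarrow>
     (\<forall>n. g n \<ge> 0) \<and> (\<forall>n. g n = 0 \<longleftrightarrow> n = 0) \<and>
     (\<exists>L. \<forall>m n. \<bar>g m - g n\<bar> \<le> L * \<bar>real m - real n\<bar>) \<and> mono g"

definition gfact :: "(nat \<Rightarrow> real) \<Rightarrow> nat \<Rightarrow> real" where
  "gfact g n = (\<Prod>i=1..n. g i)"

definition Zg :: "(nat \<Rightarrow> real) \<Rightarrow> real \<Rightarrow> real" where
  "Zg g \<phi> = (\<Sum>n. \<phi> ^ n / gfact g n)"

definition Pg :: "(nat \<Rightarrow> real) \<Rightarrow> real \<Rightarrow> nat \<Rightarrow> real" where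
  "Pg g \<phi> n = \<phi> ^ n / (gfact g n * Zg g \<phi>)"

definition moment :: "(nat \<Rightarrow> real) \<Rightarrow> real \<Rightarrow> nat \<Rightarrow> real" where
  "moment g \<phi> n = (\<Sum>k. real k ^ n * Pg g \<phi> k)"

definition variance_g :: "(nat \<Rightarrow> real) \<Rightarrow> real \<Rightarrow> real" where
  "variance_g g \<phi> = moment g \<phi> 2 - (moment g \<phi> 1)\<^sup>2"

end

theory Submission
  imports Defs "HOL-Real_Asymp.Real_Asymp"
begin

text \<open>Put c = \<phi>^(1/\<alpha>), so that \<phi> = c^\<alpha>. The unnormalised weights w(k) = \<phi>^k / g(k)! satisfy
  w(k+1) / w(k) = \<phi> / g(k+1), and g(k) \<sim> k^\<alpha> makes this ratio uniformly smaller than 1 beyond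
  (1+\<epsilon>)c and uniformly larger than 1 below (1-\<epsilon>)c. Hence the part of \<Sum> k^n w(k) beyond (1+\<epsilon>)c
  is dominated by a geometric series, while the part of \<Sum> w(k) below (1-\<epsilon>)c is exponentially
  small in c, so E[X^n] = \<Sum> k^n w(k) / \<Sum> w(k) \<sim> c^n. Since (ln Z)' = E[X] / \<phi>, l'Hopital's rule
  turns E[X] \<sim> \<phi>^(1/\<alpha>) into ln Z \<sim> \<alpha> \<phi>^(1/\<alpha>); and Var X = E[X^2] - E[X]^2 = o(\<phi>^(2/\<alpha>))
  because both terms are \<sim> \<phi>^(2/\<alpha>).\<close>

lemma real_nat_ceiling_le: "0 \<le> x \<Longrightarrow> real (nat \<lceil>x\<rceil>) \<le> x + 1"
  using of_int_ceiling_le_add_one[of x] by simp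

lemma real_nat_floor_gt: "x - 1 < real (nat \<lfloor>x\<rfloor>)"
  using real_of_int_floor_gt_diff_one[of x] by linarith

lemma ratio_le_imp_le_power:
  fixes b :: "nat \<Rightarrow> real"
  assumes "\<forall>k\<ge>N. b (Suc k) \<le> r * b k" "0 \<le> r"
  shows "b (N + j) \<le> r ^ j * b N"
proof (induction j)
  case (Suc j)
  have "b (N + Suc j) \<le> r * b (N + j)"
    using assms(1) by simp
  also have "\<dots> \<le> r * (r ^ j * b N)"
    using Suc assms(2) by (rule mult_left_mono)
  finally show ?case by simp
qed simp

lemma ratio_ge_imp_le_power:
  fixes a :: "nat \<Rightarrow> real"
  assumes "\<forall>k<N. a k \<le> r * a (Suc k)" "0 \<le> r" "j \<le> N"
  shows "a (N - j) \<le> r ^ j * a N"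
  using assms(3)
proof (induction j)
  case (Suc j)
  have "a (N - Suc j) \<le> r * a (N - j)"
    using assms(1)[rule_format, of "N - Suc j"] Suc.prems by (simp add: Suc_diff_Suc)
  also have "\<dots> \<le> r * (r ^ j * a N)"
    using Suc assms(2) by (intro mult_left_mono) auto
  finally show ?case by simp
qed simp

lemma suminf_shift_le_geometric:
  fixes b :: "nat \<Rightarrow> real"
  assumes "summable b" "\<forall>k\<ge>N. b (Suc k) \<le> r * b k" "0 \<le> r" "r < 1"
  shows "(\<Sum>j. b (j + N)) \<le> b N / (1 - r)"
proof -
  have "(\<Sum>j. b (j + N)) \<le> (\<Sum>j. r ^ j * b N)"
  proof (rule suminf_le)
    show "b (j + N) \<le> r ^ j * b N" for j
      using ratio_le_imp_le_power[OF assms(2,3), of j] by (simp add: add.commute)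
    show "summable (\<lambda>j. b (j + N))"
      using assms(1) by (rule summable_ignore_initial_segment)
    show "summable (\<lambda>j. r ^ j * b N)"
      using assms(3,4) by (intro summable_mult2 summable_geometric) simp
  qed
  also have "\<dots> = b N / (1 - r)"
    using suminf_mult2[OF summable_geometric[of r]] suminf_geometric[of r] assms(3,4) by simp
  finally show ?thesis .
qed

lemma power_weighted_suminf_le:
  fixes a :: "nat \<Rightarrow> real"
  assumes nonneg: "\<And>k. 0 \<le> a k" and sa: "summable a" and sb: "summable (\<lambda>k. real k ^ n * a k)"
    and K: "K0 \<le> K1" and r: "0 \<le> r" "r < 1"
    and ratio: "\<forall>k\<ge>K0. real (Suc k) ^ n * a (Suc k) \<le> r * (real k ^ n * a k)"
  shows "(\<Sum>k. real k ^ n * a k) \<le> (real K1 ^ n + r ^ (K1 - K0) * real K0 ^ n / (1 - r)) * (\<Sum>k. a k)"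
proof -
  define b where "b k = real k ^ n * a k" for k
  have a_le: "a k \<le> (\<Sum>k. a k)" for k
    using sum_le_suminf[OF sa, of "{k}"] nonneg by simp
  have split: "(\<Sum>k. b k) = (\<Sum>j. b (j + K1)) + sum b {..<K1}"
    using sb unfolding b_def by (rule suminf_split_initial_segment)
  have "(\<Sum>j. b (j + K1)) \<le> b K1 / (1 - r)"
    using suminf_shift_le_geometric[of b K1 r] sb ratio K r unfolding b_def by simp
  also have "b K1 \<le> r ^ (K1 - K0) * b K0"
    using ratio_le_imp_le_power[of K0 b r "K1 - K0"] ratio K r unfolding b_def by simp
  also have "b K0 \<le> real K0 ^ n * (\<Sum>k. a k)"
    unfolding b_def by (intro mult_left_mono a_le) simp
  finally have tail: "(\<Sum>j. b (j + K1)) \<le> r ^ (K1 - K0) * real K0 ^ n * (\<Sum>k. a k) / (1 - r)"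
    using r by (simp add: divide_right_mono mult_left_mono mult.assoc)
  have "sum b {..<K1} \<le> (\<Sum>k<K1. real K1 ^ n * a k)"
    unfolding b_def using nonneg by (intro sum_mono mult_right_mono power_mono) auto
  also have "\<dots> \<le> real K1 ^ n * (\<Sum>k. a k)"
    unfolding sum_distrib_left[symmetric] using nonneg by (intro mult_left_mono sum_le_suminf sa) auto
  finally have head: "sum b {..<K1} \<le> real K1 ^ n * (\<Sum>k. a k)" .
  show ?thesis
    using split tail head unfolding b_def by (simp add: algebra_simps)
qed

lemma power_weighted_suminf_ge:
  fixes a :: "nat \<Rightarrow> real"
  assumes nonneg: "\<And>k. 0 \<le> a k" and sa: "summable a" and sb: "summable (\<lambda>k. real k ^ n * a k)"
    and M: "M \<le> M3" and \<rho>: "0 \<le> \<rho>" "\<rho> \<le> 1" and x: "0 \<le> x" "x \<le> real M"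
    and ratio: "\<forall>k<M3. a k \<le> \<rho> * a (Suc k)"
  shows "x ^ n * (1 - real M * \<rho> ^ (M3 - M)) * (\<Sum>k. a k) \<le> (\<Sum>k. real k ^ n * a k)"
proof -
  have a_le: "a k \<le> (\<Sum>k. a k)" for k
    using sum_le_suminf[OF sa, of "{k}"] nonneg by simp
  have head: "sum a {..<M} \<le> real M * \<rho> ^ (M3 - M) * (\<Sum>k. a k)"
  proof -
    have "a k \<le> \<rho> ^ (M3 - M) * (\<Sum>k. a k)" if "k < M" for k
    proof -
      have "a k \<le> \<rho> ^ (M3 - k) * a M3"
        using ratio_ge_imp_le_power[OF ratio \<rho>(1), of "M3 - k"] that M by simp
      also have "\<dots> \<le> \<rho> ^ (M3 - M) * (\<Sum>k. a k)"
        using that \<rho> nonneg a_le by (intro mult_mono power_decreasing) auto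
      finally show ?thesis .
    qed
    then show ?thesis
      using sum_bounded_above[of "{..<M}" a "\<rho> ^ (M3 - M) * (\<Sum>k. a k)"] by (simp add: mult.assoc)
  qed
  have tail: "x ^ n * (\<Sum>j. a (j + M)) \<le> (\<Sum>j. real (j + M) ^ n * a (j + M))"
  proof -
    have "(\<Sum>j. x ^ n * a (j + M)) \<le> (\<Sum>j. real (j + M) ^ n * a (j + M))"
      using nonneg x
      by (intro suminf_le summable_mult summable_ignore_initial_segment sa
          summable_ignore_initial_segment[OF sb, of M] mult_right_mono power_mono) auto
    then show ?thesis
      using suminf_mult[OF summable_ignore_initial_segment[OF sa, of M]] by simp
  qed
  have "(\<Sum>k. a k) = (\<Sum>j. a (j + M)) + sum a {..<M}"
    by (rule suminf_split_initial_segment[OF sa])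
  moreover have "(\<Sum>k. real k ^ n * a k) = (\<Sum>j. real (j + M) ^ n * a (j + M)) + (\<Sum>k<M. real k ^ n * a k)"
    by (rule suminf_split_initial_segment[OF sb])
  moreover have "0 \<le> (\<Sum>k<M. real k ^ n * a k)"
    using nonneg by (intro sum_nonneg) simp
  moreover have "x ^ n * sum a {..<M} \<le> x ^ n * (real M * \<rho> ^ (M3 - M) * (\<Sum>k. a k))"
    using head x by (intro mult_left_mono) auto
  ultimately show ?thesis
    using tail by (simp add: algebra_simps)
qed

lemma tendsto_powr_less_one_at_top:
  fixes r e d :: real
  assumes "0 < r" "r < 1" "0 < e"
  shows "((\<lambda>c. r powr (e * c + d)) \<longlongrightarrow> 0) at_top"
    and "((\<lambda>c. c * r powr (e * c + d)) \<longlongrightarrow> 0) at_top"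
proof -
  define m where "m = - ln r"
  have "0 < m" "\<And>y. r powr y = exp (- (m * y))"
    using assms by (simp_all add: m_def powr_def mult.commute)
  then show "((\<lambda>c. r powr (e * c + d)) \<longlongrightarrow> 0) at_top"
    and "((\<lambda>c. c * r powr (e * c + d)) \<longlongrightarrow> 0) at_top"
    using assms(3) by (simp_all, real_asymp+)
qed

lemma tendsto_of_eventual_bounds:
  fixes f :: "'a \<Rightarrow> real" and u l :: "real \<Rightarrow> real"
  assumes "(u \<longlongrightarrow> L) (at_right 0)" "(l \<longlongrightarrow> L) (at_right 0)"
    and upper: "\<And>\<epsilon>. 0 < \<epsilon> \<Longrightarrow> \<epsilon> < 1 \<Longrightarrow> eventually (\<lambda>x. f x \<le> u \<epsilon>) F"
    and lower: "\<And>\<epsilon>. 0 < \<epsilon> \<Longrightarrow> \<epsilon> < 1 \<Longrightarrow> eventually (\<lambda>x. l \<epsilon> \<le> f x) F"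
  shows "(f \<longlongrightarrow> L) F"
proof (rule order_tendstoI)
  have small: "eventually (\<lambda>\<epsilon>::real. 0 < \<epsilon> \<and> \<epsilon> < 1) (at_right 0)"
    by (simp add: eventually_at_right_field) (rule exI[of _ 1], auto)
  fix a
  show "eventually (\<lambda>x. f x < a) F" if a: "L < a"
  proof -
    obtain \<epsilon> where "u \<epsilon> < a" "0 < \<epsilon>" "\<epsilon> < 1"
      using eventually_happens'[OF trivial_limit_at_right_real
          eventually_conj[OF order_tendstoD(2)[OF assms(1) a] small]] by blast
    with upper[of \<epsilon>] show ?thesis by (auto elim: eventually_mono)
  qed
  show "eventually (\<lambda>x. a < f x) F" if a: "a < L"
  proof -
    obtain \<epsilon> where "a < l \<epsilon>" "0 < \<epsilon>" "\<epsilon> < 1"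
      using eventually_happens'[OF trivial_limit_at_right_real
          eventually_conj[OF order_tendstoD(1)[OF assms(2) a] small]] by blast
    with lower[of \<epsilon>] show ?thesis by (auto elim: eventually_mono)
  qed
qed

lemma admissible_g_pos: "admissible_g g \<Longrightarrow> 0 < k \<Longrightarrow> 0 < g k"
  unfolding admissible_g_def by (metis less_eq_real_def not_gr0)

lemma gfact_0 [simp]: "gfact g 0 = 1"
  unfolding gfact_def by simp

lemma gfact_Suc: "gfact g (Suc k) = gfact g k * g (Suc k)"
  unfolding gfact_def by (simp add: prod.nat_ivl_Suc' mult.commute)

lemma gfact_pos: "admissible_g g \<Longrightarrow> 0 < gfact g k"
  unfolding gfact_def by (rule prod_pos) (auto intro: admissible_g_pos)

definition weight :: "(nat \<Rightarrow> real) \<Rightarrow> real \<Rightarrow> nat \<Rightarrow> real" where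
  "weight g \<phi> k = \<phi> ^ k / gfact g k"

definition power_sum :: "(nat \<Rightarrow> real) \<Rightarrow> real \<Rightarrow> nat \<Rightarrow> real" where
  "power_sum g \<phi> n = (\<Sum>k. real k ^ n * weight g \<phi> k)"

lemma weight_0 [simp]: "weight g \<phi> 0 = 1"
  unfolding weight_def by simp

lemma weight_Suc: "weight g \<phi> (Suc k) = weight g \<phi> k * \<phi> / g (Suc k)"
  unfolding weight_def gfact_Suc by simp

lemma weight_nonneg: "admissible_g g \<Longrightarrow> 0 \<le> \<phi> \<Longrightarrow> 0 \<le> weight g \<phi> k"
  unfolding weight_def using gfact_pos[of g k] by simp

lemma Zg_eq_power_sum: "Zg g \<phi> = power_sum g \<phi> 0"
  unfolding Zg_def power_sum_def weight_def by simp

lemma filterlim_at_top_of_ratio_powr: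
  fixes g :: "nat \<Rightarrow> real"
  assumes "0 < \<alpha>" and lim: "((\<lambda>k. g k / real k powr \<alpha>) \<longlongrightarrow> 1) at_top"
  shows "filterlim g at_top sequentially"
proof -
  have "filterlim (\<lambda>k. real k powr \<alpha>) at_top sequentially"
    using assms(1) by real_asymp
  then have "filterlim (\<lambda>k. g k / real k powr \<alpha> * real k powr \<alpha>) at_top sequentially"
    by (rule filterlim_tendsto_pos_mult_at_top[OF lim zero_less_one])
  moreover have "eventually (\<lambda>k. g k / real k powr \<alpha> * real k powr \<alpha> = g k) sequentially"
    using eventually_gt_at_top[of 0] by eventually_elim simp
  ultimately show ?thesis
    using filterlim_cong by fastforce
qed

lemma eventually_powr_le_g:
  fixes g :: "nat \<Rightarrow> real"
  assumes \<alpha>: "0 < \<alpha>" and lim: "((\<lambda>k. g k / real k powr \<alpha>) \<longlongrightarrow> 1) at_top" and \<epsilon>: "0 < \<epsilon>"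
  obtains r where "0 < r" "r < 1"
    "eventually (\<lambda>c. \<forall>j. (1 + \<epsilon>) * c \<le> real j \<longrightarrow> c powr \<alpha> \<le> r * g j) at_top"
proof -
  define q where "q = (1 + \<epsilon>) powr \<alpha>"
  have q: "1 < q"
    unfolding q_def using \<alpha> \<epsilon> by (intro gr_one_powr) auto
  obtain N where N: "\<And>k. N \<le> k \<Longrightarrow> (q + 1) / (2 * q) < g k / real k powr \<alpha>"
    using order_tendstoD(1)[OF lim, of "(q + 1) / (2 * q)"] q
    by (auto simp: eventually_at_top_linorder field_simps)
  have bound: "c powr \<alpha> \<le> 2 / (q + 1) * g j" if c: "max 1 (real N) \<le> c" and j: "(1 + \<epsilon>) * c \<le> real j" for c j
  proof -
    have "0 \<le> \<epsilon> * c"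
      using c \<epsilon> by simp
    then have "c \<le> real j"
      using j by (simp add: algebra_simps)
    then have jN: "N \<le> j" "0 < j"
      using c by linarith+
    have "(q + 1) / 2 * c powr \<alpha> = (q + 1) / (2 * q) * ((1 + \<epsilon>) * c) powr \<alpha>"
      using \<epsilon> c q by (simp add: q_def powr_mult)
    also have "\<dots> \<le> (q + 1) / (2 * q) * real j powr \<alpha>"
      using j \<epsilon> c \<alpha> q by (intro mult_left_mono powr_mono2) auto
    also have "\<dots> < g j"
      using N[OF jN(1)] jN(2) by (simp add: field_simps)
    finally show ?thesis
      using q by (simp add: field_simps)
  qed
  have "eventually (\<lambda>c. \<forall>j. (1 + \<epsilon>) * c \<le> real j \<longrightarrow> c powr \<alpha> \<le> 2 / (q + 1) * g j) at_top"
    using eventually_ge_at_top[of "max 1 (real N)"] by (rule eventually_mono) (use bound in blast)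
  moreover have "0 < 2 / (q + 1)" "2 / (q + 1) < 1"
    using q by simp_all
  ultimately show thesis using that by blast
qed

lemma eventually_g_le_powr:
  fixes g :: "nat \<Rightarrow> real"
  assumes \<alpha>: "0 < \<alpha>" and lim: "((\<lambda>k. g k / real k powr \<alpha>) \<longlongrightarrow> 1) at_top" and "mono g"
    and \<epsilon>: "0 < \<epsilon>" "\<epsilon> < 1"
  obtains \<rho> where "0 < \<rho>" "\<rho> < 1"
    "eventually (\<lambda>c. \<forall>j. real j \<le> (1 - \<epsilon>) * c \<longrightarrow> g j \<le> \<rho> * c powr \<alpha>) at_top"
proof -
  define q where "q = (1 - \<epsilon>) powr \<alpha>"
  have q: "0 < q" "q < 1"
    unfolding q_def using \<alpha> \<epsilon> by (simp_all add: powr01_less_one)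
  obtain N where N: "\<And>k. N \<le> k \<Longrightarrow> g k / real k powr \<alpha> < (1 + q) / (2 * q)"
    using order_tendstoD(2)[OF lim, of "(1 + q) / (2 * q)"] q
    by (auto simp: eventually_at_top_linorder field_simps)
  have bound: "g j \<le> (1 + q) / 2 * c powr \<alpha>"
    if c: "(real N + 1) / (1 - \<epsilon>) \<le> c" and j: "real j \<le> (1 - \<epsilon>) * c" for c j
  proof -
    define m where "m = nat \<lfloor>(1 - \<epsilon>) * c\<rfloor>"
    have "real N + 1 \<le> (1 - \<epsilon>) * c"
      using c \<epsilon> by (simp add: field_simps)
    then have m: "N \<le> m" "0 < m" "real m \<le> (1 - \<epsilon>) * c"
      using real_nat_floor_gt[of "(1 - \<epsilon>) * c"] of_nat_floor[of "(1 - \<epsilon>) * c"]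
      unfolding m_def by linarith+
    have "g j \<le> g m"
      using j \<open>mono g\<close> unfolding m_def by (simp add: le_nat_floor monoD)
    also have "\<dots> < (1 + q) / (2 * q) * real m powr \<alpha>"
      using N[OF m(1)] m(2) by (simp add: field_simps)
    also have "\<dots> \<le> (1 + q) / (2 * q) * ((1 - \<epsilon>) * c) powr \<alpha>"
      using m(3) q \<alpha> by (intro mult_left_mono powr_mono2) auto
    also have "\<dots> = (1 + q) / 2 * c powr \<alpha>"
      using \<epsilon> m q by (simp add: q_def powr_mult)
    finally show ?thesis
      by simp
  qed
  have "eventually (\<lambda>c. \<forall>j. real j \<le> (1 - \<epsilon>) * c \<longrightarrow> g j \<le> (1 + q) / 2 * c powr \<alpha>) at_top"
    using eventually_ge_at_top[of "(real N + 1) / (1 - \<epsilon>)"] by (rule eventually_mono) (use bound in blast)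
  moreover have "0 < (1 + q) / 2" "(1 + q) / 2 < 1"
    using q by simp_all
  ultimately show thesis using that by blast
qed

context
  fixes g :: "nat \<Rightarrow> real"
  assumes adm: "admissible_g g" and unbounded: "filterlim g at_top sequentially"
begin

lemma summable_power_weight:
  assumes "0 \<le> \<phi>"
  shows "summable (\<lambda>k. real k ^ n * weight g \<phi> k)"
proof -
  obtain N where N: "\<And>k. N \<le> k \<Longrightarrow> 2 ^ (n + 1) * \<phi> \<le> g k"
    using unbounded by (auto simp: filterlim_at_top eventually_at_top_linorder)
  show ?thesis
  proof (rule summable_ratio_test[of "1/2" "Suc N"])
    fix k assume k: "Suc N \<le> k"
    have g: "0 < g (Suc k)" "\<phi> / g (Suc k) \<le> 1 / 2 ^ (n + 1)"
      using admissible_g_pos[OF adm] N[of "Suc k"] k assms by (auto simp: field_simps)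
    have "real (Suc k) ^ n \<le> (2 * real k) ^ n"
      using k by (intro power_mono) auto
    then have pow: "real (Suc k) ^ n \<le> 2 ^ n * real k ^ n"
      by (simp add: power_mult_distrib)
    have w: "0 \<le> weight g \<phi> k" using weight_nonneg[OF adm assms] .
    have "real (Suc k) ^ n * weight g \<phi> (Suc k) = real (Suc k) ^ n * weight g \<phi> k * (\<phi> / g (Suc k))"
      by (simp add: weight_Suc)
    also have "\<dots> \<le> (2 ^ n * real k ^ n) * weight g \<phi> k * (1 / 2 ^ (n + 1))"
      using pow w g assms by (intro mult_mono mult_right_mono) auto
    also have "\<dots> = 1/2 * (real k ^ n * weight g \<phi> k)"
      by simp
    finally show "norm (real (Suc k) ^ n * weight g \<phi> (Suc k)) \<le> 1/2 * norm (real k ^ n * weight g \<phi> k)"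
      using w weight_nonneg[OF adm assms, of "Suc k"] by simp
  qed simp
qed

lemma summable_weight: "0 \<le> \<phi> \<Longrightarrow> summable (weight g \<phi>)"
  using summable_power_weight[of \<phi> 0] by simp

lemma power_sum_0_ge_1: "0 \<le> \<phi> \<Longrightarrow> 1 \<le> power_sum g \<phi> 0"
  using sum_le_suminf[OF summable_weight, of \<phi> "{0}"] weight_nonneg[OF adm]
  by (simp add: power_sum_def)

lemma moment_eq_power_sum:
  assumes "0 \<le> \<phi>"
  shows "moment g \<phi> n = power_sum g \<phi> n / power_sum g \<phi> 0"
proof -
  have "(\<lambda>k. real k ^ n * Pg g \<phi> k) = (\<lambda>k. real k ^ n * weight g \<phi> k / power_sum g \<phi> 0)"
    by (simp add: fun_eq_iff Pg_def weight_def Zg_eq_power_sum)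
  then show ?thesis
    unfolding moment_def power_sum_def[of g \<phi> n]
    using suminf_divide[OF summable_power_weight[OF assms, of n]] by simp
qed


lemma Zg_has_real_derivative:
  assumes "0 < \<phi>"
  shows "(Zg g has_real_derivative power_sum g \<phi> 1 / \<phi>) (at \<phi>)"
proof -
  define cf where "cf n = 1 / gfact g n" for n
  have Zg: "Zg g = (\<lambda>x. \<Sum>n. cf n * x ^ n)"
    by (simp add: fun_eq_iff Zg_def cf_def)
  have "summable (\<lambda>n. cf n * y ^ n)" for y
  proof (rule summable_norm_cancel)
    have "norm (cf n * y ^ n) = weight g \<bar>y\<bar> n" for n
      using gfact_pos[OF adm, of n] by (simp add: cf_def weight_def abs_mult power_abs)
    then show "summable (\<lambda>n. norm (cf n * y ^ n))"
      using summable_weight[of "\<bar>y\<bar>"] by simp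
  qed
  then have "(Zg g has_real_derivative (\<Sum>n. diffs cf n * \<phi> ^ n)) (at \<phi>)"
    unfolding Zg by (rule termdiffs_strong_converges_everywhere)
  moreover have "(\<Sum>n. diffs cf n * \<phi> ^ n) = power_sum g \<phi> 1 / \<phi>"
  proof -
    have summ: "summable (\<lambda>n. real (Suc n) ^ 1 * weight g \<phi> (Suc n))"
      using summable_power_weight[of \<phi> 1] assms
      by (subst summable_Suc_iff[of "\<lambda>k. real k ^ 1 * weight g \<phi> k"]) simp
    have "diffs cf n * \<phi> ^ n = real (Suc n) ^ 1 * weight g \<phi> (Suc n) / \<phi>" for n
      using assms by (simp add: diffs_def cf_def weight_def)
    then have "(\<Sum>n. diffs cf n * \<phi> ^ n) = (\<Sum>n. real (Suc n) ^ 1 * weight g \<phi> (Suc n)) / \<phi>"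
      using suminf_divide[OF summ] by simp
    also have "(\<Sum>n. real (Suc n) ^ 1 * weight g \<phi> (Suc n)) = power_sum g \<phi> 1"
      using suminf_split_head[OF summable_power_weight[of \<phi> 1]] assms by (simp add: power_sum_def)
    finally show ?thesis .
  qed
  ultimately show ?thesis by simp
qed

lemma ln_Zg_has_real_derivative:
  assumes "0 < \<phi>"
  shows "((\<lambda>x. ln (Zg g x)) has_real_derivative moment g \<phi> 1 / \<phi>) (at \<phi>)"
proof -
  have Z: "0 < Zg g \<phi>"
    using power_sum_0_ge_1[of \<phi>] assms by (simp add: Zg_eq_power_sum)
  have "((\<lambda>x. ln (Zg g x)) has_real_derivative 1 / Zg g \<phi> * (power_sum g \<phi> 1 / \<phi>)) (at \<phi>)"
    by (rule DERIV_chain2[OF DERIV_ln_divide[OF Z] Zg_has_real_derivative[OF assms]])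
  then show ?thesis
    using assms by (simp add: moment_eq_power_sum Zg_eq_power_sum)
qed


lemma power_weight_Suc_le:
  assumes "0 < \<phi>" "0 < c" "c \<le> real k" "\<phi> \<le> r * g (Suc k)"
  shows "real (Suc k) ^ n * weight g \<phi> (Suc k) \<le> (1 + 1/c) ^ n * r * (real k ^ n * weight g \<phi> k)"
proof -
  have "real (Suc k) \<le> (1 + 1/c) * real k"
    using assms(2,3) by (simp add: field_simps)
  then have "real (Suc k) ^ n \<le> (1 + 1/c) ^ n * real k ^ n"
    by (metis of_nat_0_le_iff power_mono power_mult_distrib)
  moreover have "weight g \<phi> (Suc k) \<le> r * weight g \<phi> k"
  proof -
    have "weight g \<phi> k * \<phi> \<le> weight g \<phi> k * (r * g (Suc k))"
      using assms(1,4) weight_nonneg[OF adm, of \<phi> k] by (intro mult_left_mono) auto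
    then show ?thesis
      using admissible_g_pos[OF adm, of "Suc k"] by (simp add: weight_Suc divide_le_eq mult_ac)
  qed
  ultimately have "real (Suc k) ^ n * weight g \<phi> (Suc k) \<le> ((1 + 1/c) ^ n * real k ^ n) * (r * weight g \<phi> k)"
    using weight_nonneg[OF adm, of \<phi>] assms(1,2) by (intro mult_mono) auto
  then show ?thesis by (simp add: mult_ac)
qed

lemma weight_le_Suc:
  assumes "0 < \<phi>" "g (Suc k) \<le> \<rho> * \<phi>"
  shows "weight g \<phi> k \<le> \<rho> * weight g \<phi> (Suc k)"
proof -
  have "weight g \<phi> k = weight g \<phi> (Suc k) * g (Suc k) / \<phi>"
    using assms(1) admissible_g_pos[OF adm, of "Suc k"] by (simp add: weight_Suc)
  also have "\<dots> \<le> weight g \<phi> (Suc k) * (\<rho> * \<phi>) / \<phi>"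
    using assms weight_nonneg[OF adm, of \<phi>] by (intro divide_right_mono mult_left_mono) auto
  finally show ?thesis using assms(1) by (simp add: mult.commute)
qed


lemma power_sum_le_of_decay:
  assumes \<phi>: "0 < \<phi>" and c: "0 < c" and \<epsilon>: "0 < \<epsilon>" and r: "0 < r" "r < 1"
    and ratio: "\<forall>k. (1 + \<epsilon>/2) * c \<le> real k \<longrightarrow>
      real (Suc k) ^ n * weight g \<phi> (Suc k) \<le> r * (real k ^ n * weight g \<phi> k)"
  shows "power_sum g \<phi> n \<le> ((1 + \<epsilon>) * c + 2) ^ n * (1 + r powr (\<epsilon> * c / 2) / (1 - r)) * power_sum g \<phi> 0"
proof -
  define K0 where "K0 = nat \<lceil>(1 + \<epsilon>/2) * c\<rceil>"
  define K1 where "K1 = K0 + nat \<lceil>\<epsilon> * c / 2\<rceil>"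
  have \<epsilon>c: "0 < \<epsilon> * c"
    using c \<epsilon> by simp
  have K0: "(1 + \<epsilon>/2) * c \<le> real K0" "real K0 \<le> (1 + \<epsilon>/2) * c + 1"
    unfolding K0_def by (rule real_nat_ceiling_ge, rule real_nat_ceiling_le) (use c \<epsilon> in simp)
  have K1: "real K1 \<le> (1 + \<epsilon>) * c + 2"
    using K0(2) real_nat_ceiling_le[of "\<epsilon> * c / 2"] \<epsilon>c unfolding K1_def by (simp add: algebra_simps)
  have "r ^ (K1 - K0) = r powr real (nat \<lceil>\<epsilon> * c / 2\<rceil>)"
    using r by (simp add: K1_def powr_realpow)
  also have "\<dots> \<le> r powr (\<epsilon> * c / 2)"
    using r by (intro powr_mono') linarith+
  finally have decay: "r ^ (K1 - K0) \<le> r powr (\<epsilon> * c / 2)" .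
  have "power_sum g \<phi> n \<le> (real K1 ^ n + r ^ (K1 - K0) * real K0 ^ n / (1 - r)) * power_sum g \<phi> 0"
    unfolding power_sum_def power_0 mult_1 using r ratio K0(1) \<phi>
    by (intro power_weighted_suminf_le weight_nonneg[OF adm] summable_weight summable_power_weight)
      (auto simp: K1_def)
  also have "\<dots> \<le> ((1 + \<epsilon>) * c + 2) ^ n * (1 + r powr (\<epsilon> * c / 2) / (1 - r)) * power_sum g \<phi> 0"
  proof (rule mult_right_mono)
    have "r ^ (K1 - K0) * real K0 ^ n \<le> r powr (\<epsilon> * c / 2) * ((1 + \<epsilon>) * c + 2) ^ n"
      using decay K0 r \<epsilon>c by (intro mult_mono power_mono) (auto simp: algebra_simps)
    moreover have "real K1 ^ n \<le> ((1 + \<epsilon>) * c + 2) ^ n"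
      using K1 by (intro power_mono) auto
    ultimately have "real K1 ^ n + r ^ (K1 - K0) * real K0 ^ n / (1 - r)
        \<le> ((1 + \<epsilon>) * c + 2) ^ n + r powr (\<epsilon> * c / 2) * ((1 + \<epsilon>) * c + 2) ^ n / (1 - r)"
      using r by (intro add_mono divide_right_mono) auto
    also have "\<dots> = ((1 + \<epsilon>) * c + 2) ^ n * (1 + r powr (\<epsilon> * c / 2) / (1 - r))"
      by (simp add: algebra_simps)
    finally show "real K1 ^ n + r ^ (K1 - K0) * real K0 ^ n / (1 - r)
        \<le> ((1 + \<epsilon>) * c + 2) ^ n * (1 + r powr (\<epsilon> * c / 2) / (1 - r))" .
    show "0 \<le> power_sum g \<phi> 0"
      using power_sum_0_ge_1[of \<phi>] \<phi> by simp
  qed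
  finally show ?thesis .
qed


lemma power_sum_ge_of_growth:
  assumes \<phi>: "0 < \<phi>" and c: "0 < c" and \<epsilon>: "0 < \<epsilon>" "\<epsilon> < 1" and \<rho>: "0 < \<rho>" "\<rho> < 1"
    and \<epsilon>c: "4 \<le> \<epsilon> * c"
    and ratio: "\<forall>k. real (Suc k) \<le> (1 - \<epsilon>/2) * c \<longrightarrow> weight g \<phi> k \<le> \<rho> * weight g \<phi> (Suc k)"
  shows "((1 - \<epsilon>) * c) ^ n * (1 - (c + 1) * \<rho> powr (\<epsilon> * c / 2 - 2)) * power_sum g \<phi> 0 \<le> power_sum g \<phi> n"
proof -
  define M where "M = nat \<lceil>(1 - \<epsilon>) * c\<rceil>"
  define M3 where "M3 = nat \<lfloor>(1 - \<epsilon>/2) * c\<rfloor>"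
  have M: "(1 - \<epsilon>) * c \<le> real M" "real M \<le> (1 - \<epsilon>) * c + 1"
    unfolding M_def by (rule real_nat_ceiling_ge, rule real_nat_ceiling_le) (use c \<epsilon> in simp)
  have M3: "(1 - \<epsilon>/2) * c - 1 < real M3" "real M3 \<le> (1 - \<epsilon>/2) * c"
    unfolding M3_def by (rule real_nat_floor_gt, rule of_nat_floor) (use c \<epsilon> in simp)
  have "real M < real M3"
    using M(2) M3(1) \<epsilon>c by (simp add: algebra_simps)
  then have MM3: "M \<le> M3" by simp
  have "\<rho> ^ (M3 - M) = \<rho> powr (real M3 - real M)"
    using \<rho> MM3 by (simp add: powr_realpow flip: of_nat_diff)
  also have "\<dots> \<le> \<rho> powr (\<epsilon> * c / 2 - 2)"
    using \<rho> M(2) M3(1) by (intro powr_mono') (auto simp: algebra_simps)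
  finally have "real M * \<rho> ^ (M3 - M) \<le> (c + 1) * \<rho> powr (\<epsilon> * c / 2 - 2)"
    using M(2) \<epsilon>c \<rho> by (intro mult_mono) (auto simp: algebra_simps)
  then have "((1 - \<epsilon>) * c) ^ n * (1 - (c + 1) * \<rho> powr (\<epsilon> * c / 2 - 2)) * power_sum g \<phi> 0
      \<le> ((1 - \<epsilon>) * c) ^ n * (1 - real M * \<rho> ^ (M3 - M)) * power_sum g \<phi> 0"
    using \<epsilon> c power_sum_0_ge_1[of \<phi>] \<phi> by (intro mult_right_mono mult_left_mono) auto
  also have "\<dots> \<le> power_sum g \<phi> n"
    unfolding power_sum_def power_0 mult_1 using MM3 \<rho> \<epsilon> c M(1) M3(2) ratio \<phi>
    by (intro power_weighted_suminf_ge weight_nonneg[OF adm] summable_weight summable_power_weight)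
      auto
  finally show ?thesis .
qed

end

context
  fixes g :: "nat \<Rightarrow> real" and \<alpha> :: real
  assumes adm: "admissible_g g" and \<alpha>: "0 < \<alpha>"
    and lim: "((\<lambda>k. g k / real k powr \<alpha>) \<longlongrightarrow> 1) at_top"
begin

lemma g_unbounded: "filterlim g at_top sequentially"
  using filterlim_at_top_of_ratio_powr[OF \<alpha> lim] .

lemma eventually_power_weight_decay:
  assumes "0 < \<epsilon>"
  obtains r where "0 < r" "r < 1"
    "eventually (\<lambda>c. \<forall>k. (1 + \<epsilon>) * c \<le> real k \<longrightarrow>
       real (Suc k) ^ n * weight g (c powr \<alpha>) (Suc k) \<le> r * (real k ^ n * weight g (c powr \<alpha>) k)) at_top"
proof -
  obtain r where r: "0 < r" "r < 1"
    and ev_g: "eventually (\<lambda>c. \<forall>j. (1 + \<epsilon>) * c \<le> real j \<longrightarrow> c powr \<alpha> \<le> r * g j) at_top"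
    using eventually_powr_le_g[OF \<alpha> lim assms] by blast
  define r' where "r' = (1 + r) / 2"
  have r': "0 < r'" "r' < 1" "r < r'"
    using r by (simp_all add: r'_def)
  have "((\<lambda>c. (1 + 1/c) ^ n * r) \<longlongrightarrow> 1 ^ n * r) at_top"
    by (intro tendsto_intros) real_asymp
  then have ev_r: "eventually (\<lambda>c. (1 + 1/c) ^ n * r < r') at_top"
    using order_tendstoD(2) r'(3) by fastforce
  have decay: "\<forall>k. (1 + \<epsilon>) * c \<le> real k \<longrightarrow>
      real (Suc k) ^ n * weight g (c powr \<alpha>) (Suc k) \<le> r' * (real k ^ n * weight g (c powr \<alpha>) k)"
    if c: "0 < c" and g_c: "\<forall>j. (1 + \<epsilon>) * c \<le> real j \<longrightarrow> c powr \<alpha> \<le> r * g j"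
      and r_c: "(1 + 1/c) ^ n * r < r'" for c
  proof (intro allI impI)
    fix k assume k: "(1 + \<epsilon>) * c \<le> real k"
    moreover have "0 \<le> \<epsilon> * c"
      using assms c by simp
    ultimately have "c \<le> real k"
      by (simp add: algebra_simps)
    moreover have "c powr \<alpha> \<le> r * g (Suc k)"
      using g_c k by simp
    ultimately have "real (Suc k) ^ n * weight g (c powr \<alpha>) (Suc k)
        \<le> (1 + 1/c) ^ n * r * (real k ^ n * weight g (c powr \<alpha>) k)"
      using c by (intro power_weight_Suc_le[OF adm g_unbounded]) auto
    also have "\<dots> \<le> r' * (real k ^ n * weight g (c powr \<alpha>) k)"
      using r_c weight_nonneg[OF adm, of "c powr \<alpha>" k] by (intro mult_right_mono) auto
    finally show "real (Suc k) ^ n * weight g (c powr \<alpha>) (Suc k) \<le> r' * (real k ^ n * weight g (c powr \<alpha>) k)" .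
  qed
  have "eventually (\<lambda>c. \<forall>k. (1 + \<epsilon>) * c \<le> real k \<longrightarrow>
      real (Suc k) ^ n * weight g (c powr \<alpha>) (Suc k) \<le> r' * (real k ^ n * weight g (c powr \<alpha>) k)) at_top"
    using eventually_gt_at_top[of 0] ev_g ev_r by eventually_elim (use decay in blast)
  with r' that show thesis by blast
qed

lemma eventually_weight_growth:
  assumes "0 < \<epsilon>" "\<epsilon> < 1"
  obtains \<rho> where "0 < \<rho>" "\<rho> < 1"
    "eventually (\<lambda>c. \<forall>k. real (Suc k) \<le> (1 - \<epsilon>) * c \<longrightarrow>
       weight g (c powr \<alpha>) k \<le> \<rho> * weight g (c powr \<alpha>) (Suc k)) at_top"
proof -
  have "mono g"
    using adm by (simp add: admissible_g_def)
  then obtain \<rho> where \<rho>: "0 < \<rho>" "\<rho> < 1"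
    and ev_g: "eventually (\<lambda>c. \<forall>j. real j \<le> (1 - \<epsilon>) * c \<longrightarrow> g j \<le> \<rho> * c powr \<alpha>) at_top"
    using eventually_g_le_powr[OF \<alpha> lim _ assms] by blast
  have "eventually (\<lambda>c. \<forall>k. real (Suc k) \<le> (1 - \<epsilon>) * c \<longrightarrow>
      weight g (c powr \<alpha>) k \<le> \<rho> * weight g (c powr \<alpha>) (Suc k)) at_top"
    using eventually_gt_at_top[of 0] ev_g
    by eventually_elim (auto intro: weight_le_Suc[OF adm g_unbounded])
  with \<rho> that show thesis by blast
qed


lemma eventually_power_sum_ratio_le:
  assumes \<epsilon>: "0 < \<epsilon>"
  shows "eventually (\<lambda>c. power_sum g (c powr \<alpha>) n / (c ^ n * power_sum g (c powr \<alpha>) 0) \<le> (1 + \<epsilon>) ^ n + \<epsilon>) at_top"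
proof -
  obtain r where r: "0 < r" "r < 1"
    and ev_decay: "eventually (\<lambda>c. \<forall>k. (1 + \<epsilon>/2) * c \<le> real k \<longrightarrow>
       real (Suc k) ^ n * weight g (c powr \<alpha>) (Suc k) \<le> r * (real k ^ n * weight g (c powr \<alpha>) k)) at_top"
    using eventually_power_weight_decay[of "\<epsilon>/2"] \<epsilon> by auto
  define u where "u c = (((1 + \<epsilon>) * c + 2) / c) ^ n * (1 + r powr (\<epsilon> * c / 2) / (1 - r))" for c
  have "((\<lambda>c. r powr (\<epsilon> * c / 2)) \<longlongrightarrow> 0) at_top"
    using tendsto_powr_less_one_at_top(1)[OF r, of "\<epsilon>/2" 0] \<epsilon> by simp
  moreover have "((\<lambda>c. ((1 + \<epsilon>) * c + 2) / c) \<longlongrightarrow> 1 + \<epsilon>) at_top"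
    by real_asymp
  ultimately have "(u \<longlongrightarrow> (1 + \<epsilon>) ^ n * (1 + 0 / (1 - r))) at_top"
    unfolding u_def using r by (intro tendsto_mult tendsto_power tendsto_add tendsto_const tendsto_divide) auto
  then have ev_u: "eventually (\<lambda>c. u c < (1 + \<epsilon>) ^ n + \<epsilon>) at_top"
    using order_tendstoD(2) \<epsilon> by fastforce
  have bound: "power_sum g (c powr \<alpha>) n / (c ^ n * power_sum g (c powr \<alpha>) 0) \<le> u c"
    if c: "0 < c" and decay: "\<forall>k. (1 + \<epsilon>/2) * c \<le> real k \<longrightarrow>
       real (Suc k) ^ n * weight g (c powr \<alpha>) (Suc k) \<le> r * (real k ^ n * weight g (c powr \<alpha>) k)" for c
  proof -
    have S0: "0 < power_sum g (c powr \<alpha>) 0"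
      using power_sum_0_ge_1[OF adm g_unbounded, of "c powr \<alpha>"] by simp
    have "power_sum g (c powr \<alpha>) n
        \<le> ((1 + \<epsilon>) * c + 2) ^ n * (1 + r powr (\<epsilon> * c / 2) / (1 - r)) * power_sum g (c powr \<alpha>) 0"
      using c \<epsilon> r decay by (intro power_sum_le_of_decay[OF adm g_unbounded]) auto
    then have "power_sum g (c powr \<alpha>) n / (c ^ n * power_sum g (c powr \<alpha>) 0)
        \<le> ((1 + \<epsilon>) * c + 2) ^ n * (1 + r powr (\<epsilon> * c / 2) / (1 - r)) * power_sum g (c powr \<alpha>) 0
          / (c ^ n * power_sum g (c powr \<alpha>) 0)"
      using c S0 by (intro divide_right_mono) auto
    also have "\<dots> = u c"
      using c S0 by (simp add: u_def power_divide)
    finally show ?thesis .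
  qed
  show ?thesis
    using eventually_gt_at_top[of 0] ev_decay ev_u by eventually_elim (use bound in fastforce)
qed

lemma eventually_power_sum_ratio_ge:
  assumes \<epsilon>: "0 < \<epsilon>" "\<epsilon> < 1"
  shows "eventually (\<lambda>c. (1 - \<epsilon>) ^ n - \<epsilon> \<le> power_sum g (c powr \<alpha>) n / (c ^ n * power_sum g (c powr \<alpha>) 0)) at_top"
proof -
  obtain \<rho> where \<rho>: "0 < \<rho>" "\<rho> < 1"
    and ev_growth: "eventually (\<lambda>c. \<forall>k. real (Suc k) \<le> (1 - \<epsilon>/2) * c \<longrightarrow>
       weight g (c powr \<alpha>) k \<le> \<rho> * weight g (c powr \<alpha>) (Suc k)) at_top"
    using eventually_weight_growth[of "\<epsilon>/2"] \<epsilon> by auto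
  define l where "l c = (1 - \<epsilon>) ^ n * (1 - (c + 1) * \<rho> powr (\<epsilon> * c / 2 - 2))" for c
  have "((\<lambda>c. (c + 1) * \<rho> powr (\<epsilon> * c / 2 - 2)) \<longlongrightarrow> 0 + 0) at_top"
    using tendsto_add[OF tendsto_powr_less_one_at_top(2,1)[OF \<rho>, of "\<epsilon>/2" "-2"]] \<epsilon>
    by (simp add: distrib_right)
  then have "(l \<longlongrightarrow> (1 - \<epsilon>) ^ n * (1 - 0)) at_top"
    unfolding l_def by (intro tendsto_intros) auto
  then have ev_l: "eventually (\<lambda>c. (1 - \<epsilon>) ^ n - \<epsilon> < l c) at_top"
    using order_tendstoD(1) \<epsilon> by fastforce
  have bound: "l c \<le> power_sum g (c powr \<alpha>) n / (c ^ n * power_sum g (c powr \<alpha>) 0)"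
    if c: "4 / \<epsilon> \<le> c" and growth: "\<forall>k. real (Suc k) \<le> (1 - \<epsilon>/2) * c \<longrightarrow>
       weight g (c powr \<alpha>) k \<le> \<rho> * weight g (c powr \<alpha>) (Suc k)" for c
  proof -
    have "0 < 4 / \<epsilon>"
      using \<epsilon> by simp
    then have c_pos: "0 < c"
      using c by linarith
    have \<epsilon>c: "4 \<le> \<epsilon> * c"
      using c \<epsilon> by (simp add: field_simps)
    have S0: "0 < power_sum g (c powr \<alpha>) 0"
      using power_sum_0_ge_1[OF adm g_unbounded, of "c powr \<alpha>"] by simp
    have "((1 - \<epsilon>) * c) ^ n * (1 - (c + 1) * \<rho> powr (\<epsilon> * c / 2 - 2)) * power_sum g (c powr \<alpha>) 0
        \<le> power_sum g (c powr \<alpha>) n"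
      using c_pos \<epsilon>c \<epsilon> \<rho> growth by (intro power_sum_ge_of_growth[OF adm g_unbounded]) auto
    then show ?thesis
      using c_pos S0 by (simp add: l_def le_divide_eq power_mult_distrib mult_ac)
  qed
  show ?thesis
    using eventually_ge_at_top[of "4 / \<epsilon>"] ev_growth ev_l by eventually_elim (use bound in fastforce)
qed


lemma power_sum_ratio_tendsto:
  "((\<lambda>c. power_sum g (c powr \<alpha>) n / (c ^ n * power_sum g (c powr \<alpha>) 0)) \<longlongrightarrow> 1) at_top"
proof (rule tendsto_of_eventual_bounds)
  have "((\<lambda>\<epsilon>::real. (1 + \<epsilon>) ^ n + \<epsilon>) \<longlongrightarrow> (1 + 0) ^ n + 0) (at_right 0)"
    by (intro tendsto_intros)
  then show "((\<lambda>\<epsilon>::real. (1 + \<epsilon>) ^ n + \<epsilon>) \<longlongrightarrow> 1) (at_right 0)"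
    by simp
  have "((\<lambda>\<epsilon>::real. (1 - \<epsilon>) ^ n - \<epsilon>) \<longlongrightarrow> (1 - 0) ^ n - 0) (at_right 0)"
    by (intro tendsto_intros)
  then show "((\<lambda>\<epsilon>::real. (1 - \<epsilon>) ^ n - \<epsilon>) \<longlongrightarrow> 1) (at_right 0)"
    by simp
qed (use eventually_power_sum_ratio_le eventually_power_sum_ratio_ge in auto)

lemma moment_ratio_tendsto: "((\<lambda>\<phi>. moment g \<phi> n / \<phi> powr (real n / \<alpha>)) \<longlongrightarrow> 1) at_top"
proof -
  have "filterlim (\<lambda>\<phi>. \<phi> powr (1 / \<alpha>)) at_top at_top"
    using \<alpha> by real_asymp
  with power_sum_ratio_tendsto have "((\<lambda>\<phi>. power_sum g ((\<phi> powr (1/\<alpha>)) powr \<alpha>) n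
      / ((\<phi> powr (1/\<alpha>)) ^ n * power_sum g ((\<phi> powr (1/\<alpha>)) powr \<alpha>) 0)) \<longlongrightarrow> 1) at_top"
    by (rule filterlim_compose)
  moreover have "eventually (\<lambda>\<phi>. power_sum g ((\<phi> powr (1/\<alpha>)) powr \<alpha>) n
      / ((\<phi> powr (1/\<alpha>)) ^ n * power_sum g ((\<phi> powr (1/\<alpha>)) powr \<alpha>) 0)
      = moment g \<phi> n / \<phi> powr (real n / \<alpha>)) at_top"
    using eventually_gt_at_top[of 0]
  proof eventually_elim
    case (elim \<phi>)
    then have "(\<phi> powr (1/\<alpha>)) powr \<alpha> = \<phi>" "(\<phi> powr (1/\<alpha>)) ^ n = \<phi> powr (real n / \<alpha>)"
      using \<alpha> by (simp_all add: powr_powr flip: powr_realpow)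
    then show ?case
      using elim by (simp add: moment_eq_power_sum[OF adm g_unbounded])
  qed
  ultimately show ?thesis
    by (rule Lim_transform_eventually)
qed

lemma ln_Zg_ratio_tendsto: "((\<lambda>\<phi>. ln (Zg g \<phi>) / (\<alpha> * \<phi> powr (1 / \<alpha>))) \<longlongrightarrow> 1) at_top"
proof (rule lhospital_at_top_at_top)
  show "filterlim (\<lambda>\<phi>. \<alpha> * \<phi> powr (1 / \<alpha>)) at_top at_top"
    using \<alpha> by real_asymp
  show "eventually (\<lambda>\<phi>. \<phi> powr (1 / \<alpha> - 1) \<noteq> 0) at_top"
    using eventually_gt_at_top[of 0] by eventually_elim simp
  show "eventually (\<lambda>\<phi>. ((\<lambda>x. ln (Zg g x)) has_real_derivative moment g \<phi> 1 / \<phi>) (at \<phi>)) at_top"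
    using eventually_gt_at_top[of 0] by eventually_elim (rule ln_Zg_has_real_derivative[OF adm g_unbounded])
  show "eventually (\<lambda>\<phi>. ((\<lambda>x. \<alpha> * x powr (1 / \<alpha>)) has_real_derivative \<phi> powr (1 / \<alpha> - 1)) (at \<phi>)) at_top"
    using eventually_gt_at_top[of 0]
  proof eventually_elim
    case (elim \<phi>)
    have "((\<lambda>x. \<alpha> * x powr (1 / \<alpha>)) has_real_derivative \<alpha> * (1 / \<alpha> * \<phi> powr (1 / \<alpha> - 1))) (at \<phi>)"
      using elim by (intro DERIV_cmult has_real_derivative_powr) auto
    then show ?case
      using \<alpha> by simp
  qed
  have "eventually (\<lambda>\<phi>. moment g \<phi> 1 / \<phi> powr (real 1 / \<alpha>)
      = moment g \<phi> 1 / \<phi> / \<phi> powr (1 / \<alpha> - 1)) at_top"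
    using eventually_gt_at_top[of 0]
    by eventually_elim (simp add: divide_divide_eq_left powr_mult_base)
  then show "((\<lambda>\<phi>. moment g \<phi> 1 / \<phi> / \<phi> powr (1 / \<alpha> - 1)) \<longlongrightarrow> 1) at_top"
    by (rule Lim_transform_eventually[OF moment_ratio_tendsto])
qed

lemma variance_ratio_tendsto: "((\<lambda>\<phi>. variance_g g \<phi> / \<phi> powr (2 / \<alpha>)) \<longlongrightarrow> 0) at_top"
proof -
  have "((\<lambda>\<phi>. moment g \<phi> 2 / \<phi> powr (real 2 / \<alpha>) - (moment g \<phi> 1 / \<phi> powr (real 1 / \<alpha>))\<^sup>2)
      \<longlongrightarrow> 1 - 1\<^sup>2) at_top"
    by (intro tendsto_intros moment_ratio_tendsto)
  moreover have "eventually (\<lambda>\<phi>. moment g \<phi> 2 / \<phi> powr (real 2 / \<alpha>) - (moment g \<phi> 1 / \<phi> powr (real 1 / \<alpha>))\<^sup>2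
      = variance_g g \<phi> / \<phi> powr (2 / \<alpha>)) at_top"
    using eventually_gt_at_top[of 0]
  proof eventually_elim
    case (elim \<phi>)
    then have "\<phi> powr (2 / \<alpha>) = (\<phi> powr (1 / \<alpha>))\<^sup>2"
      by (simp add: powr_powr flip: powr_realpow)
    then show ?case
      by (simp add: variance_g_def power_divide diff_divide_distrib)
  qed
  ultimately show ?thesis
    by (simp add: tendsto_cong)
qed

end

theorem mainTheorem8:
  fixes g :: "nat \<Rightarrow> real" and \<alpha> :: real
  assumes "admissible_g g"
    and "0 < \<alpha>" and "\<alpha> \<le> 1"
    and "((\<lambda>k. g k / real k powr \<alpha>) \<longlongrightarrow> 1) at_top"
  shows "(\<forall>n::nat. n \<ge> 1 \<longrightarrow>
            (\<lambda>\<phi>. moment g \<phi> n) \<sim>[at_top] (\<lambda>\<phi>. \<phi> powr (real n / \<alpha>)))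
         \<and> (\<lambda>\<phi>. ln (Zg g \<phi>)) \<sim>[at_top] (\<lambda>\<phi>. \<alpha> * \<phi> powr (1 / \<alpha>))
         \<and> (\<lambda>\<phi>. variance_g g \<phi>) \<in> o[at_top](\<lambda>\<phi>. \<phi> powr (2 / \<alpha>))"
proof (intro conjI allI impI)
  fix n :: nat
  show "(\<lambda>\<phi>. moment g \<phi> n) \<sim>[at_top] (\<lambda>\<phi>. \<phi> powr (real n / \<alpha>))"
    using moment_ratio_tendsto[OF assms(1,2,4)] by (rule asymp_equivI')
next
  show "(\<lambda>\<phi>. ln (Zg g \<phi>)) \<sim>[at_top] (\<lambda>\<phi>. \<alpha> * \<phi> powr (1 / \<alpha>))"
    using ln_Zg_ratio_tendsto[OF assms(1,2,4)] by (rule asymp_equivI')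
next
  have "eventually (\<lambda>\<phi>::real. \<phi> powr (2 / \<alpha>) \<noteq> 0) at_top"
    using eventually_gt_at_top[of 0] by eventually_elim simp
  with variance_ratio_tendsto[OF assms(1,2,4)]
  show "(\<lambda>\<phi>. variance_g g \<phi>) \<in> o[at_top](\<lambda>\<phi>. \<phi> powr (2 / \<alpha>))"
    by (rule smalloI_tendsto)
qed

end
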